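(* Let $\tau:\mathcal{D}_{\mathbf{V}_L}\to\mathcal{D}_{\mathbf{V}_H}$ be a constructive abstraction function over clusterings $\mathbb{C}$ and $\mathbb{D}$. For every intervention $\mathbf{X}_H\leftarrow\mathbf{x}_H$ with $\mathbf{X}_H\subseteq\mathbf{V}_H$ and $\mathbf{x}_H\in\mathcal{D}_{\mathbf{X}_H}$, there exist $\mathbf{X}_L$ that is a union of clusters of $\mathbb{C}$ and a value $\mathbf{x}_L\in\mathcal{D}_{\mathbf{X}_L}$ such that $\omega_\tau(\mathbf{X}_L\leftarrow\mathbf{x}_L)=(\mathbf{X}_H\leftarrow\mathbf{x}_H)$.
   Context: $\mathcal{D}_{\mathbf{X}}$ denotes the (Cartesian product) domain of a set of variables $\mathbf{X}$. An intervariable clustering of $\mathbf{V}_L$ is a set $\mathbb{C}=\{\mathbf{C}_1,\dots,\mathbf{C}_n\}$ forming a partition of a subset of $\mathbf{V}_L$; an intravariable clustering is $\mathbb{D}=\{\mathbb{D}_{\mathbf{C}_i}\}$ where $\mathbb{D}_{\mathbf{C}_i}=\{\mathcal{D}^1_{\mathbf{C}_i},\dots,\mathcal{D}^{m_i}_{\mathbf{C}_i}\}$ is a partition of $\mathcal{D}_{\mathbf{C}_i}$. A constructive abstraction function w.r.t. $\mathbb{C},\mathbb{D}$: $\mathbf{V}_H=\{V_{H,1},\dots,V_{H,n}\}$ in bijection with $\mathbb{C}$, $\mathcal{D}_{V_{H,i}}=\{v^1_{H,i},\dots,v^{m_i}_{H,i}\}$ in bijection with $\mathbb{D}_{\mathbf{C}_i}$,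 and $\tau(\mathbf{v}_L)=(\tau_{\mathbf{C}_i}(\mathbf{c}_i):\mathbf{C}_i\in\mathbb{C})$ with $\tau_{\mathbf{C}_i}(\mathbf{c}_i)=v^j_{H,i}$ iff $\mathbf{c}_i\in\mathcal{D}^j_{\mathbf{C}_i}$; for a union of clusters $\mathbf{W}_L$, $\tau(\mathbf{w}_L)=(\tau_{\mathbf{C}_i}(\mathbf{c}_i):\mathbf{C}_i\subseteq\mathbf{W}_L)$. For a set of variables $\mathbf{V}$ and a value $\mathbf{x}$ of $\mathbf{X}\subseteq\mathbf{V}$, $\mathrm{Rst}(\mathbf{V},\mathbf{x})=\{\mathbf{v}\in\mathcal{D}_{\mathbf{V}}:\mathbf{v}\text{ is consistent with }\mathbf{x}\}$; for $\mathbf{T}\subseteq\mathcal{D}_{\mathbf{V}_L}$, $\tau(\mathbf{T})=\{\tau(\mathbf{v}):\mathbf{v}\in\mathbf{T}\}$. The map $\omega_\tau$ is defined by $\omega_\tau(\mathbf{X}_L\leftarrow\mathbf{x}_L)=(\mathbf{X}_H\leftarrow\mathbf{x}_H)$ whenever $\tau(\mathrm{Rst}(\mathbf{V}_L,\mathbf{x}_L))=\mathrm{Rst}(\mathbf{V}_H,\mathbf{x}_H)$. *)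

theory Defs
  imports Main "HOL-Library.FuncSet" "HOL-Library.Disjoint_Sets"
begin

text \<open>Variables of type 'v with domains Dom :: 'v => 'a set. A value of a set of
variables X is an (extensional) function in PiE X Dom, so the domain D_X is PiE X Dom.\<close>

definition dom_of :: "'v set \<Rightarrow> ('v \<Rightarrow> 'a set) \<Rightarrow> ('v \<Rightarrow> 'a) set" where
  "dom_of X Dom = PiE X Dom"

definition Rst :: "'v set \<Rightarrow> ('v \<Rightarrow> 'a set) \<Rightarrow> 'v set \<Rightarrow> ('v \<Rightarrow> 'a) \<Rightarrow> ('v \<Rightarrow> 'a) set" where
  "Rst V Dom X x = {v \<in> dom_of V Dom. \<forall>a\<in>X. v a = x a}"

definition intervariable_clustering :: "'v set \<Rightarrow> 'v set set \<Rightarrow> bool" where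
  "intervariable_clustering VL CC \<longleftrightarrow> (\<exists>U. U \<subseteq> VL \<and> partition_on U CC)"

definition intravariable_clustering ::
  "('v \<Rightarrow> 'a set) \<Rightarrow> 'v set set \<Rightarrow> ('v set \<Rightarrow> ('v \<Rightarrow> 'a) set set) \<Rightarrow> bool" where
  "intravariable_clustering Dom CC DD \<longleftrightarrow> (\<forall>C\<in>CC. partition_on (dom_of C Dom) (DD C))"

text \<open>tau_C(c) = v^j_{H,i} iff c in D^j_C, where hval C is the bijection from the cells DD C
to the domain of the high-level variable hv C.\<close>
definition tau_C :: "('v set \<Rightarrow> ('v \<Rightarrow> 'a) set set) \<Rightarrow> ('v set \<Rightarrow> ('v \<Rightarrow> 'a) set \<Rightarrow> 'b)
    \<Rightarrow> 'v set \<Rightarrow> ('v \<Rightarrow> 'a) \<Rightarrow> 'b" where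
  "tau_C DD hval C c = hval C (THE D. D \<in> DD C \<and> c \<in> D)"

definition constructive_tau ::
  "'v set set \<Rightarrow> ('v set \<Rightarrow> ('v \<Rightarrow> 'a) set set) \<Rightarrow> 'h set \<Rightarrow> ('v set \<Rightarrow> 'h)
    \<Rightarrow> ('v set \<Rightarrow> ('v \<Rightarrow> 'a) set \<Rightarrow> 'b) \<Rightarrow> ('v \<Rightarrow> 'a) \<Rightarrow> ('h \<Rightarrow> 'b)" where
  "constructive_tau CC DD VH hv hval v =
     (\<lambda>h. if h \<in> VH then
            (let C = inv_into CC hv h in tau_C DD hval C (restrict v C))
          else undefined)"

definition constructive_abstraction ::
  "'v set \<Rightarrow> ('v \<Rightarrow> 'a set) \<Rightarrow> 'v set set \<Rightarrow> ('v set \<Rightarrow> ('v \<Rightarrow> 'a) set set)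
   \<Rightarrow> 'h set \<Rightarrow> ('h \<Rightarrow> 'b set) \<Rightarrow> ('v set \<Rightarrow> 'h) \<Rightarrow> ('v set \<Rightarrow> ('v \<Rightarrow> 'a) set \<Rightarrow> 'b)
   \<Rightarrow> (('v \<Rightarrow> 'a) \<Rightarrow> ('h \<Rightarrow> 'b)) \<Rightarrow> bool" where
  "constructive_abstraction VL DomL CC DD VH DomH hv hval tau \<longleftrightarrow>
     intervariable_clustering VL CC \<and>
     intravariable_clustering DomL CC DD \<and>
     bij_betw hv CC VH \<and>
     (\<forall>C\<in>CC. bij_betw (hval C) (DD C) (DomH (hv C))) \<and>
     (\<forall>v\<in>dom_of VL DomL. tau v = constructive_tau CC DD VH hv hval v)"

definition omega_maps ::
  "(('v \<Rightarrow> 'a) \<Rightarrow> ('h \<Rightarrow> 'b)) \<Rightarrow> 'v set \<Rightarrow> ('v \<Rightarrow> 'a set) \<Rightarrow> 'v set \<Rightarrow> ('v \<Rightarrow> 'a)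
   \<Rightarrow> 'h set \<Rightarrow> ('h \<Rightarrow> 'b set) \<Rightarrow> 'h set \<Rightarrow> ('h \<Rightarrow> 'b) \<Rightarrow> bool" where
  "omega_maps tau VL DomL XL xL VH DomH XH xH \<longleftrightarrow>
     tau ` Rst VL DomL XL xL = Rst VH DomH XH xH"

end

theory Submission
  imports Defs
begin

text \<open>Let \<open>S\<close> be the set of clusters whose high-level variable is intervened on, and let
\<open>X\<^sub>L = \<Union>S\<close>. For \<open>C \<in> S\<close> the value \<open>x\<^sub>H(hv C)\<close> names a cell of \<open>\<D>\<^sub>C\<close>; pick \<open>x\<^sub>L\<close> so that on
every such \<open>C\<close> it lies in that cell. Since \<open>\<tau>\<close> acts cluster by cluster, a low-level value
consistent with \<open>x\<^sub>L\<close> is mapped to a high-level value consistent with \<open>x\<^sub>H\<close>; conversely any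
high-level value consistent with \<open>x\<^sub>H\<close> is the image of the value obtained by gluing \<open>x\<^sub>L\<close> on
\<open>S\<close> with representatives of the prescribed cells on the remaining clusters.\<close>

lemma partition_on_the_part:
  assumes "partition_on A P" "p \<in> P" "x \<in> p"
  shows "(THE q. q \<in> P \<and> x \<in> q) = p"
  using assms by (intro the_equality) (auto simp: partition_on_def disjoint_def)

lemma PiE_glue_disjoint:
  assumes disj: "disjoint CC" and "\<Union>CC \<subseteq> V" and "\<forall>a\<in>V. Dom a \<noteq> {}"
    and q: "\<And>C. C \<in> CC \<Longrightarrow> q C \<in> PiE C Dom"
  shows "\<exists>v\<in>PiE V Dom. \<forall>C\<in>CC. restrict v C = q C"
proof -
  define P where "P a y \<longleftrightarrow> y \<in> Dom a \<and> (\<forall>C\<in>CC. a \<in> C \<longrightarrow> q C a = y)" for a y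
  have P_ex: "\<exists>y. P a y" if "a \<in> V" for a
  proof (cases "\<exists>C\<in>CC. a \<in> C")
    case True
    then obtain C where C: "C \<in> CC" "a \<in> C" by blast
    have "q C' a = q C a" if "C' \<in> CC" "a \<in> C'" for C'
      using C that disjointD[OF disj] by (cases "C' = C") auto
    then show ?thesis using C q[OF C(1)] unfolding P_def by blast
  next
    case False
    then show ?thesis using assms(3) that unfolding P_def by blast
  qed
  define v where "v = restrict (\<lambda>a. SOME y. P a y) V"
  have P_v: "P a (v a)" if "a \<in> V" for a
    unfolding v_def using that someI_ex[OF P_ex[OF that]] by simp
  have "v \<in> PiE V Dom"
    using P_v unfolding P_def by (auto simp: v_def)
  moreover have "restrict v C = q C" if C: "C \<in> CC" for C
  proof
    fix a
    show "restrict v C a = q C a"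
    proof (cases "a \<in> C")
      case True
      then have "a \<in> V" using C assms(2) by blast
      then show ?thesis using P_v True C unfolding P_def by simp
    next
      case False
      then show ?thesis using PiE_arb[OF q[OF C]] by simp
    qed
  qed
  ultimately show ?thesis by blast
qed

lemma tau_C_eq_iff:
  assumes part: "partition_on (PiE C Dom) (DD C)" and bij: "bij_betw (hval C) (DD C) Y"
    and "c \<in> PiE C Dom" "y \<in> Y"
  shows "tau_C DD hval C c = y \<longleftrightarrow> c \<in> inv_into (DD C) (hval C) y"
proof -
  define E where "E = inv_into (DD C) (hval C) y"
  have E: "E \<in> DD C" "hval C E = y"
    using bij \<open>y \<in> Y\<close> unfolding E_def by (auto simp: bij_betw_def inv_into_into f_inv_into_f)
  obtain D where D: "D \<in> DD C" "c \<in> D" using part \<open>c \<in> PiE C Dom\<close> partition_onD1 by blast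
  have "tau_C DD hval C c = hval C D"
    unfolding tau_C_def using partition_on_the_part[OF part D] by simp
  also have "\<dots> = y \<longleftrightarrow> D = E"
    using bij D(1) E unfolding bij_betw_def by (auto dest: inj_onD)
  also have "\<dots> \<longleftrightarrow> c \<in> E"
    using partition_on_the_part[OF part D] partition_on_the_part[OF part E(1)] D(2) by auto
  finally show ?thesis unfolding E_def .
qed

locale inhabited_constructive_abstraction =
  fixes VL :: "'v set" and DomL :: "'v \<Rightarrow> 'a set"
    and CC :: "'v set set" and DD :: "'v set \<Rightarrow> ('v \<Rightarrow> 'a) set set"
    and VH :: "'h set" and DomH :: "'h \<Rightarrow> 'b set"
    and hv :: "'v set \<Rightarrow> 'h" and hval :: "'v set \<Rightarrow> ('v \<Rightarrow> 'a) set \<Rightarrow> 'b"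
    and tau :: "('v \<Rightarrow> 'a) \<Rightarrow> ('h \<Rightarrow> 'b)"
  assumes abstraction: "constructive_abstraction VL DomL CC DD VH DomH hv hval tau"
    and nonempty_domains: "\<forall>x\<in>VL. DomL x \<noteq> {}"
begin

lemma disjoint_clusters: "disjoint CC"
  and Union_clusters_subset: "\<Union>CC \<subseteq> VL"
proof -
  obtain U where "U \<subseteq> VL" "partition_on U CC"
    using abstraction unfolding constructive_abstraction_def intervariable_clustering_def by blast
  then show "disjoint CC" "\<Union>CC \<subseteq> VL" using partition_onD1[of U CC] partition_onD2 by auto
qed

lemma partition_cells: "C \<in> CC \<Longrightarrow> partition_on (PiE C DomL) (DD C)"
  using abstraction
  unfolding constructive_abstraction_def intravariable_clustering_def dom_of_def by blast

lemma bij_betw_hv: "bij_betw hv CC VH"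
  and bij_betw_hval: "C \<in> CC \<Longrightarrow> bij_betw (hval C) (DD C) (DomH (hv C))"
  using abstraction unfolding constructive_abstraction_def by blast+

lemma obtain_cluster:
  assumes "h \<in> VH"
  obtains C where "C \<in> CC" "h = hv C"
  using assms bij_betw_hv by (metis bij_betw_imp_surj_on imageE)

lemma restrict_in_PiE_cluster:
  "v \<in> PiE VL DomL \<Longrightarrow> C \<in> CC \<Longrightarrow> restrict v C \<in> PiE C DomL"
  using Union_clusters_subset by (auto simp: PiE_iff)

lemma tau_hv:
  assumes "v \<in> PiE VL DomL" "C \<in> CC"
  shows "tau v (hv C) = tau_C DD hval C (restrict v C)"
proof -
  have "hv C \<in> VH" "inv_into CC hv (hv C) = C"
    using bij_betw_hv assms(2) by (auto simp: bij_betw_def)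
  then show ?thesis
    using abstraction assms(1)
    by (simp add: constructive_abstraction_def constructive_tau_def dom_of_def)
qed

lemma tau_outside: "v \<in> PiE VL DomL \<Longrightarrow> h \<notin> VH \<Longrightarrow> tau v h = undefined"
  using abstraction by (simp add: constructive_abstraction_def constructive_tau_def dom_of_def)

definition cell_of :: "'v set \<Rightarrow> 'b \<Rightarrow> ('v \<Rightarrow> 'a) set" where
  "cell_of C y = inv_into (DD C) (hval C) y"

lemma cell_of_in_cells: "C \<in> CC \<Longrightarrow> y \<in> DomH (hv C) \<Longrightarrow> cell_of C y \<in> DD C"
  using bij_betw_hval by (auto simp: cell_of_def bij_betw_def inv_into_into)

lemma cell_of_subset: "C \<in> CC \<Longrightarrow> y \<in> DomH (hv C) \<Longrightarrow> cell_of C y \<subseteq> PiE C DomL"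
  using cell_of_in_cells partition_cells partition_onD1 by (metis Union_upper)

lemma cell_of_nonempty: "C \<in> CC \<Longrightarrow> y \<in> DomH (hv C) \<Longrightarrow> cell_of C y \<noteq> {}"
  using cell_of_in_cells partition_cells partition_onD3 by metis

lemma tau_hv_eq_iff:
  assumes "v \<in> PiE VL DomL" "C \<in> CC" "y \<in> DomH (hv C)"
  shows "tau v (hv C) = y \<longleftrightarrow> restrict v C \<in> cell_of C y"
  unfolding tau_hv[OF assms(1,2)] cell_of_def
  using tau_C_eq_iff[where DD = DD and hval = hval, OF partition_cells[OF assms(2)]
      bij_betw_hval[OF assms(2)] restrict_in_PiE_cluster[OF assms(1,2)] assms(3)] .

lemma tau_in_PiE:
  assumes v: "v \<in> PiE VL DomL"
  shows "tau v \<in> PiE VH DomH"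
proof (rule PiE_I)
  fix h assume "h \<in> VH"
  then obtain C where C: "C \<in> CC" "h = hv C" by (rule obtain_cluster)
  obtain D where D: "D \<in> DD C" "restrict v C \<in> D"
    using partition_cells[OF C(1)] restrict_in_PiE_cluster[OF v C(1)] partition_onD1 by blast
  have "hval C D \<in> DomH (hv C)" "cell_of C (hval C D) = D"
    using bij_betw_hval[OF C(1)] D(1) by (auto simp: cell_of_def bij_betw_def)
  then show "tau v h \<in> DomH h"
    using tau_hv_eq_iff[OF v C(1)] D(2) C(2) by metis
qed (use tau_outside v in simp)

lemma tau_preimage_with_restrictions:
  assumes w: "w \<in> PiE VH DomH"
    and q: "\<And>C. C \<in> CC \<Longrightarrow> q C \<in> cell_of C (w (hv C))"
  obtains v where "v \<in> PiE VL DomL" "tau v = w" "\<And>C. C \<in> CC \<Longrightarrow> restrict v C = q C"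
proof -
  have w_hv: "w (hv C) \<in> DomH (hv C)" if "C \<in> CC" for C
    using w that bij_betw_hv by (auto simp: bij_betw_def)
  have "q C \<in> PiE C DomL" if "C \<in> CC" for C
    using q[OF that] cell_of_subset[OF that w_hv[OF that]] by blast
  then obtain v where v: "v \<in> PiE VL DomL" and restr: "\<And>C. C \<in> CC \<Longrightarrow> restrict v C = q C"
    using PiE_glue_disjoint[OF disjoint_clusters Union_clusters_subset nonempty_domains] by metis
  have "tau v h = w h" for h
  proof (cases "h \<in> VH")
    case True
    then obtain C where C: "C \<in> CC" "h = hv C" by (rule obtain_cluster)
    then show ?thesis
      using tau_hv_eq_iff[OF v C(1) w_hv[OF C(1)]] restr[OF C(1)] q[OF C(1)] by simp
  next
    case False
    then show ?thesis using tau_outside[OF v] w by auto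
  qed
  then show thesis using that v restr by blast
qed

definition clusters_of :: "'h set \<Rightarrow> 'v set set" where
  "clusters_of XH = {C \<in> CC. hv C \<in> XH}"

lemma exists_value_in_cells:
  assumes xH: "xH \<in> PiE XH DomH"
  shows "\<exists>xL\<in>PiE (\<Union>(clusters_of XH)) DomL.
           \<forall>C\<in>clusters_of XH. restrict xL C \<in> cell_of C (xH (hv C))"
proof -
  define q where "q C = (SOME c. c \<in> cell_of C (xH (hv C)))" for C
  have q: "q C \<in> cell_of C (xH (hv C))" if "C \<in> clusters_of XH" for C
    using that xH cell_of_nonempty unfolding q_def clusters_of_def by (auto simp: some_in_eq)
  have "q C \<in> PiE C DomL" if "C \<in> clusters_of XH" for C
    using that q cell_of_subset xH unfolding clusters_of_def by blast
  moreover have "disjoint (clusters_of XH)"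
    using disjoint_clusters by (auto simp: clusters_of_def disjoint_def)
  moreover have "\<forall>a\<in>\<Union>(clusters_of XH). DomL a \<noteq> {}"
    using nonempty_domains Union_clusters_subset by (auto simp: clusters_of_def)
  ultimately obtain xL where xL: "xL \<in> PiE (\<Union>(clusters_of XH)) DomL"
    and restr: "\<forall>C\<in>clusters_of XH. restrict xL C = q C"
    using PiE_glue_disjoint[of "clusters_of XH" "\<Union>(clusters_of XH)" DomL q] by blast
  have "\<forall>C\<in>clusters_of XH. restrict xL C \<in> cell_of C (xH (hv C))"
    using restr q by simp
  with xL show ?thesis by blast
qed

lemma tau_image_Rst_subset:
  assumes XH: "XH \<subseteq> VH" and xH: "xH \<in> PiE XH DomH"
    and xL: "\<forall>C\<in>clusters_of XH. restrict xL C \<in> cell_of C (xH (hv C))"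
  shows "tau ` Rst VL DomL (\<Union>(clusters_of XH)) xL \<subseteq> Rst VH DomH XH xH"
proof
  fix w assume "w \<in> tau ` Rst VL DomL (\<Union>(clusters_of XH)) xL"
  then obtain v where v: "v \<in> PiE VL DomL" and agree: "\<forall>a\<in>\<Union>(clusters_of XH). v a = xL a"
    and w: "w = tau v"
    unfolding Rst_def dom_of_def by blast
  have "tau v h = xH h" if h: "h \<in> XH" for h
  proof -
    obtain C where C: "C \<in> CC" "h = hv C" using h XH by (blast elim: obtain_cluster)
    then have C_over: "C \<in> clusters_of XH" using h by (simp add: clusters_of_def)
    then have "restrict v C = restrict xL C" using agree by auto
    then show ?thesis
      using tau_hv_eq_iff[OF v C(1)] xL C_over xH h C(2) by auto
  qed
  then show "w \<in> Rst VH DomH XH xH"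
    using tau_in_PiE[OF v] w unfolding Rst_def dom_of_def by blast
qed

lemma Rst_subset_tau_image:
  assumes xL: "\<forall>C\<in>clusters_of XH. restrict xL C \<in> cell_of C (xH (hv C))"
  shows "Rst VH DomH XH xH \<subseteq> tau ` Rst VL DomL (\<Union>(clusters_of XH)) xL"
proof
  fix w assume "w \<in> Rst VH DomH XH xH"
  then have w: "w \<in> PiE VH DomH" and agree: "\<forall>h\<in>XH. w h = xH h"
    unfolding Rst_def dom_of_def by auto
  define q where "q C = (if C \<in> clusters_of XH then restrict xL C
      else SOME c. c \<in> cell_of C (w (hv C)))" for C
  have "q C \<in> cell_of C (w (hv C))" if C: "C \<in> CC" for C
  proof (cases "C \<in> clusters_of XH")
    case True
    then show ?thesis using xL agree by (simp add: q_def clusters_of_def)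
  next
    case False
    have "w (hv C) \<in> DomH (hv C)" using w C bij_betw_hv by (auto simp: bij_betw_def)
    then show ?thesis using False cell_of_nonempty[OF C] by (simp add: q_def some_in_eq)
  qed
  then obtain v where v: "v \<in> PiE VL DomL" "tau v = w"
    and restr: "\<And>C. C \<in> CC \<Longrightarrow> restrict v C = q C"
    using tau_preimage_with_restrictions[OF w] by metis
  have "v a = xL a" if a: "a \<in> \<Union>(clusters_of XH)" for a
  proof -
    obtain C where C: "C \<in> clusters_of XH" "a \<in> C" using a by blast
    then have "restrict v C a = restrict xL C a"
      using restr[of C] by (simp add: q_def clusters_of_def)
    then show ?thesis using C(2) by simp
  qed
  then show "w \<in> tau ` Rst VL DomL (\<Union>(clusters_of XH)) xL"
    using v unfolding Rst_def dom_of_def by blast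
qed

end

theorem lemma4:
  fixes VL :: "'v set" and DomL :: "'v \<Rightarrow> 'a set"
    and CC :: "'v set set" and DD :: "'v set \<Rightarrow> ('v \<Rightarrow> 'a) set set"
    and VH :: "'h set" and DomH :: "'h \<Rightarrow> 'b set"
    and hv :: "'v set \<Rightarrow> 'h" and hval :: "'v set \<Rightarrow> ('v \<Rightarrow> 'a) set \<Rightarrow> 'b"
    and tau :: "('v \<Rightarrow> 'a) \<Rightarrow> ('h \<Rightarrow> 'b)"
    and XH :: "'h set" and xH :: "'h \<Rightarrow> 'b"
  assumes nonempty_domains: "\<forall>x\<in>VL. DomL x \<noteq> {}"
    and tau: "constructive_abstraction VL DomL CC DD VH DomH hv hval tau"
    and XH: "XH \<subseteq> VH"
    and xH: "xH \<in> dom_of XH DomH"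
  shows "\<exists>XL xL. (\<exists>S\<subseteq>CC. XL = \<Union>S) \<and> xL \<in> dom_of XL DomL \<and>
           omega_maps tau VL DomL XL xL VH DomH XH xH"
proof -
  interpret inhabited_constructive_abstraction VL DomL CC DD VH DomH hv hval tau
    using tau nonempty_domains by unfold_locales
  have xH': "xH \<in> PiE XH DomH" using xH by (simp add: dom_of_def)
  obtain xL where xL: "xL \<in> PiE (\<Union>(clusters_of XH)) DomL"
    and cells: "\<forall>C\<in>clusters_of XH. restrict xL C \<in> cell_of C (xH (hv C))"
    using exists_value_in_cells[OF xH'] by blast
  have "omega_maps tau VL DomL (\<Union>(clusters_of XH)) xL VH DomH XH xH"
    unfolding omega_maps_def
    using tau_image_Rst_subset[OF XH xH' cells] Rst_subset_tau_image[OF cells] by blast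
  moreover have "clusters_of XH \<subseteq> CC" by (auto simp: clusters_of_def)
  ultimately show ?thesis using xL unfolding dom_of_def by blast
qed

end
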